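(* Let $\Phi$ be an irreducible crystallographic root system with simple system $S$ and positive system $\Phi^+$, ordered as the root poset. If $\alpha,\beta,\gamma\in\Phi^+$, $\beta+\gamma\in\Phi^+$ and $\alpha\le\beta+\gamma$, then $\alpha\le\beta$, or $\alpha\le\gamma$, or $\alpha=\beta'+\gamma'$ for some $\beta',\gamma'\in\Phi^+$ with $\beta'\le\beta$ and $\gamma'\le\gamma$.
   Context: The root poset is $\Phi^+$ with the partial order $\alpha\le\beta$ iff $\beta-\alpha$ is a linear combination of simple roots (elements of $S$) with nonnegative integer coefficients. *)

theory Defs
  imports "HOL-Analysis.Analysis"
begin

definition refl_root :: "'a::euclidean_space \<Rightarrow> 'a \<Rightarrow> 'a" where
  "refl_root a x = x - (2 * (x \<bullet> a) / (a \<bullet> a)) *\<^sub>R a"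

text \<open>Reduced crystallographic root system (not required to span the space).\<close>
definition crystallographic_root_system :: "'a::euclidean_space set \<Rightarrow> bool" where
  "crystallographic_root_system \<Phi> \<longleftrightarrow>
     finite \<Phi> \<and> 0 \<notin> \<Phi> \<and>
     (\<forall>a\<in>\<Phi>. \<forall>c::real. c *\<^sub>R a \<in> \<Phi> \<longleftrightarrow> c = 1 \<or> c = -1) \<and>
     (\<forall>a\<in>\<Phi>. \<forall>b\<in>\<Phi>. refl_root a b \<in> \<Phi>) \<and>
     (\<forall>a\<in>\<Phi>. \<forall>b\<in>\<Phi>. 2 * (b \<bullet> a) / (a \<bullet> a) \<in> \<int>)"

definition irreducible_root_system :: "'a::euclidean_space set \<Rightarrow> bool" where
  "irreducible_root_system \<Phi> \<longleftrightarrow> \<Phi> \<noteq> {} \<and>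
     \<not> (\<exists>A B. A \<union> B = \<Phi> \<and> A \<noteq> {} \<and> B \<noteq> {} \<and> (\<forall>a\<in>A. \<forall>b\<in>B. a \<bullet> b = 0))"

definition simple_system :: "'a::euclidean_space set \<Rightarrow> 'a set \<Rightarrow> bool" where
  "simple_system \<Phi> S \<longleftrightarrow> S \<subseteq> \<Phi> \<and> independent S \<and>
     (\<forall>b\<in>\<Phi>. \<exists>c. b = (\<Sum>s\<in>S. c s *\<^sub>R s) \<and> ((\<forall>s\<in>S. c s \<ge> 0) \<or> (\<forall>s\<in>S. c s \<le> 0)))"

definition positive_roots :: "'a::euclidean_space set \<Rightarrow> 'a set \<Rightarrow> 'a set" where
  "positive_roots \<Phi> S = {b\<in>\<Phi>. \<exists>c. b = (\<Sum>s\<in>S. c s *\<^sub>R s) \<and> (\<forall>s\<in>S. c s \<ge> 0)}"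

definition root_le :: "'a::euclidean_space set \<Rightarrow> 'a \<Rightarrow> 'a \<Rightarrow> bool" where
  "root_le S a b \<longleftrightarrow> (\<exists>c::'a \<Rightarrow> nat. b - a = (\<Sum>s\<in>S. real (c s) *\<^sub>R s))"

end

theory Submission
  imports Defs
begin

text \<open>Induction on the height of \<open>\<beta> + \<gamma> - \<alpha>\<close>. If \<open>\<alpha> \<noteq> \<beta> + \<gamma>\<close>, pick a simple root \<open>s\<close>
  occurring in \<open>\<eta> = \<beta> + \<gamma> - \<alpha>\<close> with \<open>(\<eta>, s) > 0\<close>. If \<open>(\<beta> + \<gamma>, s) > 0\<close>, then say
  \<open>(\<beta>, s) > 0\<close>, so \<open>\<beta> = s\<close> (and then \<open>\<alpha> \<le> \<gamma>\<close>) or \<open>\<beta> - s\<close> is a positive root, and we descend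
  from \<open>\<beta>\<close> to \<open>\<beta> - s\<close>. Otherwise \<open>(\<alpha>, s) < 0\<close>, so \<open>\<alpha> + s\<close> is a positive root below
  \<open>\<beta> + \<gamma>\<close>; if the induction hypothesis writes \<open>\<alpha> + s = \<beta>' + \<gamma>'\<close>, then \<open>s\<close> can be
  removed from \<open>\<beta>'\<close> or from \<open>\<gamma>'\<close>, since otherwise \<open>|\<alpha> + s|\<^sup>2 = (\<alpha> + s, \<beta>' + \<gamma>') \<le> 0\<close>.
  Both cases rest on the fact that \<open>a - b\<close> is a root for roots \<open>a \<noteq> b\<close> with \<open>(a, b) > 0\<close>.\<close>

lemma root_le_refl: "root_le S x x"
  unfolding root_le_def by (rule exI[of _ "\<lambda>_. 0"]) simp

lemma root_le_trans: "root_le S x y \<Longrightarrow> root_le S y z \<Longrightarrow> root_le S x z"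
proof -
  assume "root_le S x y" "root_le S y z"
  then obtain c d where c: "y - x = (\<Sum>s\<in>S. real (c s) *\<^sub>R s)"
    and d: "z - y = (\<Sum>s\<in>S. real (d s) *\<^sub>R s)"
    unfolding root_le_def by blast
  have "z - x = (\<Sum>s\<in>S. real (c s + d s) *\<^sub>R s)"
    using c d by (simp add: scaleR_add_left sum.distrib algebra_simps)
  then show ?thesis unfolding root_le_def by (rule exI[of _ "\<lambda>s. c s + d s"])
qed

lemma sum_indicator_scaleR:
  fixes s :: "'a::real_vector"
  assumes "finite S" "s \<in> S"
  shows "(\<Sum>t\<in>S. (if t = s then 1 else 0) *\<^sub>R t) = s"
proof -
  have "(\<Sum>t\<in>S. (if t = s then 1 else 0) *\<^sub>R t) = (\<Sum>t\<in>S. if t = s then t else 0)"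
    by (rule sum.cong) auto
  then show ?thesis using assms by simp
qed

lemma root_le_diff_simple:
  assumes "finite S" "s \<in> S"
  shows "root_le S (x - s) x"
proof -
  have "x - (x - s) = (\<Sum>t\<in>S. real (if t = s then 1 else 0) *\<^sub>R t)"
    using sum_indicator_scaleR[OF assms] by (simp add: if_distrib cong: if_cong)
  then show ?thesis unfolding root_le_def by (rule exI[of _ "\<lambda>t. if t = s then 1 else 0"])
qed

lemma nat_combination_minus_simple:
  fixes s :: "'a::real_vector"
  assumes "finite S" "s \<in> S" "c s \<ge> 1"
  shows "(\<Sum>t\<in>S. real (c t) *\<^sub>R t) - s = (\<Sum>t\<in>S. real ((c(s := c s - 1)) t) *\<^sub>R t)"
    and "sum (c(s := c s - 1)) S < sum c S"
proof -
  have "(\<Sum>t\<in>S. real (c t) *\<^sub>R t)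
      = (\<Sum>t\<in>S. real ((c(s := c s - 1)) t) *\<^sub>R t + (if t = s then 1 else 0) *\<^sub>R t)"
    by (rule sum.cong) (use assms(3) in \<open>auto simp: of_nat_diff scaleR_diff_left\<close>)
  then show "(\<Sum>t\<in>S. real (c t) *\<^sub>R t) - s = (\<Sum>t\<in>S. real ((c(s := c s - 1)) t) *\<^sub>R t)"
    by (simp add: sum.distrib sum_indicator_scaleR[OF assms(1,2)])
  show "sum (c(s := c s - 1)) S < sum c S"
    using assms by (simp add: sum.remove)
qed

lemma nat_combination_inner_pos:
  fixes x :: "'a::real_inner"
  assumes "x \<noteq> 0" "x = (\<Sum>t\<in>S. real (c t) *\<^sub>R t)"
  obtains s where "s \<in> S" "c s \<ge> 1" "x \<bullet> s > 0"
proof -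
  have "0 < x \<bullet> x" using assms(1) by simp
  also have "\<dots> = (\<Sum>t\<in>S. real (c t) * (x \<bullet> t))"
    by (subst (2) assms(2)) (simp add: inner_sum_right)
  finally obtain s where "s \<in> S" "real (c s) * (x \<bullet> s) > 0"
    by (meson not_le sum_nonpos)
  then show ?thesis using that by (cases "c s") (auto simp: zero_less_mult_iff)
qed

locale root_system =
  fixes \<Phi> :: "'a::euclidean_space set"
  assumes crystallographic: "crystallographic_root_system \<Phi>"
begin

lemma zero_notin_roots: "0 \<notin> \<Phi>"
  using crystallographic unfolding crystallographic_root_system_def by blast

lemma scaleR_root_iff: "a \<in> \<Phi> \<Longrightarrow> c *\<^sub>R a \<in> \<Phi> \<longleftrightarrow> c = 1 \<or> c = -1"
  using crystallographic unfolding crystallographic_root_system_def by blast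

lemma refl_root_in_roots: "a \<in> \<Phi> \<Longrightarrow> b \<in> \<Phi> \<Longrightarrow> refl_root a b \<in> \<Phi>"
  using crystallographic unfolding crystallographic_root_system_def by blast

lemma cartan_integer: "a \<in> \<Phi> \<Longrightarrow> b \<in> \<Phi> \<Longrightarrow> 2 * (b \<bullet> a) / (a \<bullet> a) \<in> \<int>"
  using crystallographic unfolding crystallographic_root_system_def by blast

lemma uminus_root: "a \<in> \<Phi> \<Longrightarrow> -a \<in> \<Phi>"
  using scaleR_root_iff[of a "-1"] by simp

lemma inner_square_less:
  assumes a: "a \<in> \<Phi>" and b: "b \<in> \<Phi>" and ne: "a \<noteq> b" and pos: "a \<bullet> b > 0"
  shows "(a \<bullet> b)\<^sup>2 < (a \<bullet> a) * (b \<bullet> b)"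
proof -
  have a0: "a \<noteq> 0" using a zero_notin_roots by auto
  have "a \<bullet> b \<noteq> norm a * norm b"
  proof
    assume "a \<bullet> b = norm a * norm b"
    then have "norm a *\<^sub>R b = norm b *\<^sub>R a" using norm_cauchy_schwarz_eq by blast
    then have "inverse (norm a) *\<^sub>R (norm a *\<^sub>R b) = inverse (norm a) *\<^sub>R (norm b *\<^sub>R a)"
      by simp
    then have ba: "b = (norm b / norm a) *\<^sub>R a"
      using a0 by (simp add: divide_inverse_commute)
    then have "norm b / norm a = 1 \<or> norm b / norm a = -1"
      using scaleR_root_iff[OF a] b by metis
    moreover have "norm b / norm a \<ge> 0" by simp
    ultimately have "norm b / norm a = 1" by linarith
    then show False using ba ne by (metis scaleR_one)
  qed
  then have "a \<bullet> b < norm a * norm b"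
    using norm_cauchy_schwarz[of a b] by simp
  then have "(a \<bullet> b)\<^sup>2 < (norm a * norm b)\<^sup>2"
    using pos by (simp add: power_strict_mono)
  then show ?thesis by (simp add: power_mult_distrib power2_norm_eq_inner)
qed

text \<open>Both Cartan integers of \<open>a, b\<close> are positive and, by the strict Cauchy--Schwarz
  inequality, their product is below 4; so one of them is 1, and the corresponding reflection
  sends \<open>b\<close> to \<open>b - a\<close> or \<open>a\<close> to \<open>a - b\<close>.\<close>

lemma diff_root_if_inner_pos:
  assumes a: "a \<in> \<Phi>" and b: "b \<in> \<Phi>" and pos: "a \<bullet> b > 0" and ne: "a \<noteq> b"
  shows "a - b \<in> \<Phi>"
proof -
  have aa: "a \<bullet> a > 0" "b \<bullet> b > 0"
    using a b zero_notin_roots by (auto simp: inner_gt_zero_iff)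
  obtain k where k: "2 * (b \<bullet> a) / (a \<bullet> a) = of_int k"
    using cartan_integer[OF a b] Ints_cases by metis
  obtain l where l: "2 * (a \<bullet> b) / (b \<bullet> b) = of_int l"
    using cartan_integer[OF b a] Ints_cases by metis
  have "real_of_int k > 0" "real_of_int l > 0"
    using pos aa by (simp_all add: k[symmetric] l[symmetric] inner_commute)
  then have "k \<ge> 1" "l \<ge> 1" by simp_all
  have "real_of_int (k * l) = 4 * (a \<bullet> b)\<^sup>2 / ((a \<bullet> a) * (b \<bullet> b))"
    by (simp add: k[symmetric] l[symmetric] inner_commute power2_eq_square)
  also have "\<dots> < 4"
    using inner_square_less[OF a b ne pos] aa by (simp add: field_simps)
  finally have "k * l < 4" by linarith
  have "k = 1 \<or> l = 1"
  proof (rule ccontr)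
    assume "\<not> (k = 1 \<or> l = 1)"
    then have "2 * 2 \<le> k * l" using \<open>k \<ge> 1\<close> \<open>l \<ge> 1\<close> by (intro mult_mono) auto
    then show False using \<open>k * l < 4\<close> by simp
  qed
  then show ?thesis
  proof
    assume "k = 1"
    then have "refl_root a b = b - a"
      using k pos unfolding refl_root_def by (simp add: inner_commute)
    then have "-(a - b) \<in> \<Phi>" using refl_root_in_roots[OF a b] by simp
    then show ?thesis using uminus_root by fastforce
  next
    assume "l = 1"
    then have "refl_root b a = a - b"
      using l pos unfolding refl_root_def by (simp add: inner_commute)
    then show ?thesis using refl_root_in_roots[OF b a] by simp
  qed
qed

lemma root_sum_exchange:
  assumes b: "b \<in> \<Phi>" and g: "g \<in> \<Phi>" and a: "a \<in> \<Phi>" and s: "s \<in> \<Phi>"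
    and as: "a + s \<in> \<Phi>" and eq: "a + s = b + g"
  shows "b = s \<or> b - s \<in> \<Phi> \<or> g = s \<or> g - s \<in> \<Phi>"
proof (rule ccontr)
  assume n: "\<not> ?thesis"
  have "b \<bullet> s \<le> 0" "g \<bullet> s \<le> 0"
    using diff_root_if_inner_pos[OF b s] diff_root_if_inner_pos[OF g s] n by force+
  moreover have "a \<bullet> g \<le> 0"
  proof -
    have "a - g = b - s" "a = g \<longleftrightarrow> b = s" using eq by (auto simp: algebra_simps)
    then show ?thesis using diff_root_if_inner_pos[OF a g] n by force
  qed
  moreover have "a \<bullet> b \<le> 0"
  proof -
    have "a - b = g - s" "a = b \<longleftrightarrow> g = s" using eq by (auto simp: algebra_simps)
    then show ?thesis using diff_root_if_inner_pos[OF a b] n by force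
  qed
  moreover have "(a + s) \<bullet> (a + s) = a \<bullet> b + a \<bullet> g + b \<bullet> s + g \<bullet> s"
    by (subst (2) eq) (simp add: inner_add_left inner_add_right inner_commute)
  ultimately have "(a + s) \<bullet> (a + s) \<le> 0" by linarith
  then have "a + s = 0" by (metis inner_gt_zero_iff not_le)
  then show False using as zero_notin_roots by simp
qed

end

locale based_root_system = root_system +
  fixes S :: "'a::euclidean_space set"
  assumes simple: "simple_system \<Phi> S"
begin

abbreviation positive :: "'a set" where "positive \<equiv> positive_roots \<Phi> S"

lemma simple_subset_roots: "S \<subseteq> \<Phi>"
  using simple unfolding simple_system_def by blast

lemma independent_simple: "independent S"
  using simple unfolding simple_system_def by blast

lemma finite_simple: "finite S"
  using independent_simple unfolding independent_explicit by (rule conjunct1)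

lemma root_sign_coherent:
  "b \<in> \<Phi> \<Longrightarrow> \<exists>c. b = (\<Sum>s\<in>S. c s *\<^sub>R s) \<and> ((\<forall>s\<in>S. c s \<ge> 0) \<or> (\<forall>s\<in>S. c s \<le> 0))"
  using simple unfolding simple_system_def by blast

lemma positive_subset_roots: "positive \<subseteq> \<Phi>"
  unfolding positive_roots_def by blast

lemma positive_rootE:
  assumes "b \<in> positive"
  obtains c where "b = (\<Sum>t\<in>S. c t *\<^sub>R t)" "\<forall>t\<in>S. c t \<ge> 0"
  using assms unfolding positive_roots_def by blast

lemma simple_coeffs_unique:
  assumes "(\<Sum>t\<in>S. c t *\<^sub>R t) = (\<Sum>t\<in>S. d t *\<^sub>R t)" "s \<in> S"
  shows "c s = d s"
proof -
  have sum0: "(\<Sum>t\<in>S. (c t - d t) *\<^sub>R t) = 0"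
    using assms(1) by (simp add: scaleR_diff_left sum_subtractf)
  have "\<forall>u. (\<Sum>v\<in>S. u v *\<^sub>R v) = 0 \<longrightarrow> (\<forall>v\<in>S. u v = 0)"
    using independent_simple unfolding independent_explicit by (rule conjunct2)
  from this[rule_format, of "\<lambda>t. c t - d t", OF sum0 assms(2)] have "c s - d s = 0" .
  then show ?thesis by simp
qed

lemma nonneg_combination_coeff_le:
  assumes "x = (\<Sum>t\<in>S. c t *\<^sub>R t)" "y = (\<Sum>t\<in>S. d t *\<^sub>R t)"
    and "\<forall>t\<in>S. c t \<ge> 0" "\<forall>t\<in>S. d t \<ge> 0"
    and "x + y = (\<Sum>t\<in>S. e t *\<^sub>R t)" "s \<in> S"
  shows "c s \<le> e s"
proof -
  have "(\<Sum>t\<in>S. (c t + d t) *\<^sub>R t) = (\<Sum>t\<in>S. e t *\<^sub>R t)"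
    using assms(1,2,5) by (simp add: scaleR_add_left sum.distrib)
  then have "c s + d s = e s" using simple_coeffs_unique[of "\<lambda>t. c t + d t" e] assms(6) by blast
  then show ?thesis using assms(4,6) by auto
qed

lemma simple_in_positive: "s \<in> S \<Longrightarrow> s \<in> positive"
  using simple_subset_roots sum_indicator_scaleR[OF finite_simple, of s]
  unfolding positive_roots_def
  by (intro CollectI conjI) (auto intro!: exI[of _ "\<lambda>t. if t = s then 1 else 0"])

lemma positive_not_root_le_zero:
  assumes a: "a \<in> positive"
  shows "\<not> root_le S a 0"
proof
  assume "root_le S a 0"
  then obtain d where d: "-a = (\<Sum>t\<in>S. real (d t) *\<^sub>R t)"
    unfolding root_le_def by auto
  obtain c where c: "a = (\<Sum>t\<in>S. c t *\<^sub>R t)" "\<forall>t\<in>S. c t \<ge> 0"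
    using a by (rule positive_rootE)
  have sum0: "a + -a = (\<Sum>t\<in>S. 0 *\<^sub>R t)" by simp
  have "c t \<le> 0" if "t \<in> S" for t
    using nonneg_combination_coeff_le[OF c(1) d c(2) _ sum0 that] by simp
  then have "\<forall>t\<in>S. c t = 0" using c(2) by (simp add: order_antisym)
  then have "a = 0" using c(1) by simp
  then show False using a positive_subset_roots zero_notin_roots by auto
qed

lemma positive_diff_simple:
  assumes b: "b \<in> positive" and s: "s \<in> S" and bs: "b - s \<in> \<Phi>"
  shows "b - s \<in> positive"
proof -
  obtain d where d: "b - s = (\<Sum>t\<in>S. d t *\<^sub>R t)" and sgn: "(\<forall>t\<in>S. d t \<ge> 0) \<or> (\<forall>t\<in>S. d t \<le> 0)"
    using root_sign_coherent[OF bs] by blast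
  show ?thesis
  proof (cases "\<forall>t\<in>S. d t \<ge> 0")
    case True
    then show ?thesis using d bs unfolding positive_roots_def by blast
  next
    case False
    obtain c where c: "b = (\<Sum>t\<in>S. c t *\<^sub>R t)" "\<forall>t\<in>S. c t \<ge> 0"
      using b by (rule positive_rootE)
    have "s - b = - (b - s)" by simp
    then have sb: "s - b = (\<Sum>t\<in>S. (- d t) *\<^sub>R t)" unfolding d by (simp add: sum_negf)
    have nonpos: "\<forall>t\<in>S. - d t \<ge> 0" using False sgn by auto
    have sum_s: "b + (s - b) = (\<Sum>t\<in>S. (if t = s then 1 else 0) *\<^sub>R t)"
      using sum_indicator_scaleR[OF finite_simple s] by simp
    have le: "c t \<le> (if t = s then 1 else 0)" if "t \<in> S" for t
      using nonneg_combination_coeff_le[OF c(1) sb c(2) nonpos sum_s that] .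
    have "b = (\<Sum>t\<in>S. (if t = s then c s *\<^sub>R s else 0))"
      unfolding c(1)
    proof (rule sum.cong)
      fix t assume t: "t \<in> S"
      show "c t *\<^sub>R t = (if t = s then c s *\<^sub>R s else 0)"
      proof (cases "t = s")
        case False
        then have "c t \<le> 0" using le[OF t] by simp
        moreover have "c t \<ge> 0" using c(2) t by blast
        ultimately show ?thesis using False by simp
      qed simp
    qed simp
    then have bs_scaled: "b = c s *\<^sub>R s" using finite_simple s by simp
    then have "c s *\<^sub>R s \<in> \<Phi>" using b positive_subset_roots by auto
    then have "c s = 1 \<or> c s = -1"
      using scaleR_root_iff simple_subset_roots s by auto
    then have "b = s" using bs_scaled c(2) s by auto
    then show ?thesis using bs zero_notin_roots by simp
  qed
qed

lemma positive_add_simple: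
  assumes a: "a \<in> positive" and s: "s \<in> S" and as: "a + s \<in> \<Phi>"
  shows "a + s \<in> positive"
proof -
  obtain c where c: "a = (\<Sum>t\<in>S. c t *\<^sub>R t)" "\<forall>t\<in>S. c t \<ge> 0"
    using a by (rule positive_rootE)
  have "a + s = (\<Sum>t\<in>S. (c t + (if t = s then 1 else 0)) *\<^sub>R t)"
    using c(1) sum_indicator_scaleR[OF finite_simple s] by (simp add: scaleR_add_left sum.distrib)
  moreover have "\<forall>t\<in>S. c t + (if t = s then 1 else 0) \<ge> 0" using c(2) by auto
  ultimately show ?thesis using as unfolding positive_roots_def
    by (intro CollectI conjI exI[of _ "\<lambda>t. c t + (if t = s then 1 else 0)"]) auto
qed

definition below_summands :: "'a \<Rightarrow> 'a \<Rightarrow> 'a \<Rightarrow> bool" where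
  "below_summands a b g \<longleftrightarrow> root_le S a b \<or> root_le S a g \<or>
     (\<exists>b' g'. b' \<in> positive \<and> g' \<in> positive \<and> root_le S b' b \<and> root_le S g' g \<and> a = b' + g')"

lemma below_summands_commute: "below_summands a b g \<longleftrightarrow> below_summands a g b"
  unfolding below_summands_def by (auto simp: add.commute)

lemma below_summands_mono:
  "below_summands a b' g \<Longrightarrow> root_le S b' b \<Longrightarrow> below_summands a b g"
  unfolding below_summands_def by (blast intro: root_le_trans)

lemma below_summands_diff_simple:
  assumes b: "b \<in> positive" and s: "s \<in> S" and bs: "b \<bullet> s > 0"
    and eq: "b = s \<Longrightarrow> root_le S a g"
    and diff: "b - s \<in> positive \<Longrightarrow> below_summands a (b - s) g"
  shows "below_summands a b g"
proof (cases "b = s")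
  case True
  then show ?thesis using eq unfolding below_summands_def by blast
next
  case False
  have "b - s \<in> positive"
    using positive_diff_simple[OF b s] diff_root_if_inner_pos bs False b s
      positive_subset_roots simple_subset_roots by blast
  then show ?thesis
    using below_summands_mono[OF diff root_le_diff_simple[OF finite_simple s]] by blast
qed

lemma below_summands_add_simple:
  assumes a: "a \<in> positive" and s: "s \<in> S" and as: "a + s \<in> positive"
    and below: "below_summands (a + s) b g"
  shows "below_summands a b g"
proof -
  have a_le: "root_le S a (a + s)"
    using root_le_diff_simple[OF finite_simple s, of "a + s"] by simp
  have split: "below_summands a b g"
    if "b' \<in> positive" "g' \<in> positive" "root_le S b' b" "root_le S g' g"
      and sum: "a + s = b' + g'" and b': "b' = s \<or> b' - s \<in> \<Phi>" for b g b' g'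
  proof (cases "b' = s")
    case True
    then show ?thesis using that unfolding below_summands_def by auto
  next
    case False
    then have "b' - s \<in> positive" using positive_diff_simple[OF that(1) s] b' by blast
    moreover have "root_le S (b' - s) b"
      using root_le_trans[OF root_le_diff_simple[OF finite_simple s] that(3)] .
    moreover have "a = (b' - s) + g'" using sum by (simp add: algebra_simps)
    ultimately show ?thesis using that(2,4) unfolding below_summands_def by blast
  qed
  from below consider "root_le S (a + s) b" | "root_le S (a + s) g"
    | b' g' where "b' \<in> positive" "g' \<in> positive" "root_le S b' b" "root_le S g' g" "a + s = b' + g'"
    unfolding below_summands_def by blast
  then show ?thesis
  proof cases
    case (3 b' g')
    have roots: "b' \<in> \<Phi>" "g' \<in> \<Phi>" "a \<in> \<Phi>" "s \<in> \<Phi>" "a + s \<in> \<Phi>"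
      using 3 a s as positive_subset_roots simple_subset_roots by auto
    from root_sum_exchange[OF roots 3(5)] show ?thesis
    proof (elim disjE)
      show ?thesis if "b' = s" using split[OF 3] that by blast
      show ?thesis if "b' - s \<in> \<Phi>" using split[OF 3] that by blast
      show ?thesis if "g' = s"
        using split[OF 3(2,1,4,3)] 3(5) that by (simp add: add.commute below_summands_commute)
      show ?thesis if "g' - s \<in> \<Phi>"
        using split[OF 3(2,1,4,3)] 3(5) that by (simp add: add.commute below_summands_commute)
    qed
  qed (use a_le root_le_trans in \<open>auto simp: below_summands_def\<close>)
qed

lemma below_summands_if_nat_combination:
  "a \<in> positive \<Longrightarrow> b \<in> positive \<Longrightarrow> g \<in> positive \<Longrightarrow> b + g \<in> positive \<Longrightarrow>
    b + g - a = (\<Sum>t\<in>S. real (c t) *\<^sub>R t) \<Longrightarrow> sum c S = n \<Longrightarrow> below_summands a b g"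
proof (induction n arbitrary: a b g c rule: less_induct)
  case (less n a b g c)
  note a = less.prems(1) and b = less.prems(2) and g = less.prems(3) and bg = less.prems(4)
  show ?case
  proof (cases "b + g = a")
    case True
    then show ?thesis using b g root_le_refl unfolding below_summands_def by blast
  next
    case False
    then obtain s where s: "s \<in> S" "c s \<ge> 1" and pos: "(b + g - a) \<bullet> s > 0"
      using nat_combination_inner_pos[OF _ less.prems(5)] by auto
    define c' where "c' = c(s := c s - 1)"
    have c': "b + g - a - s = (\<Sum>t\<in>S. real (c' t) *\<^sub>R t)" "sum c' S < n"
      using nat_combination_minus_simple[of S s c, OF finite_simple s] less.prems(5,6)
      unfolding c'_def by auto
    show ?thesis
    proof (cases "(b + g) \<bullet> s > 0")
      case True
      have "root_le S a (b + g - s)" using c'(1) unfolding root_le_def by (auto simp: algebra_simps)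
      then have "b + g \<noteq> s" using positive_not_root_le_zero[OF a] by auto
      then have "b + g - s \<in> positive"
        using positive_diff_simple[OF bg s(1)] diff_root_if_inner_pos True bg s(1)
          positive_subset_roots simple_subset_roots by blast
      then have lower: "below_summands a x y"
        if "x \<in> positive" "y \<in> positive" "x + y = b + g" "x \<bullet> s > 0" for x y
        using that a c'
        by (intro below_summands_diff_simple[OF that(1) s(1) that(4)])
          (auto simp: root_le_def algebra_simps intro!: less.IH)
      have "b \<bullet> s > 0 \<or> g \<bullet> s > 0" using True by (simp add: inner_add_left) linarith
      then show ?thesis
        using lower[OF b g] lower[OF g b] by (auto simp: add.commute below_summands_commute)
    next
      case False
      then have "a \<bullet> - s > 0" using pos by (simp add: inner_diff_left)
      moreover have "a \<noteq> - s"
        using positive_not_root_le_zero[OF a] root_le_diff_simple[OF finite_simple s(1), of 0] by auto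
      ultimately have "a + s \<in> \<Phi>"
        using diff_root_if_inner_pos[of a "- s"] a s(1) positive_subset_roots simple_subset_roots
          uminus_root by auto
      then have "a + s \<in> positive" using positive_add_simple[OF a s(1)] by blast
      moreover have "below_summands (a + s) b g"
        using c' calculation b g bg by (intro less.IH) (auto simp: algebra_simps)
      ultimately show ?thesis using below_summands_add_simple[OF a s(1)] by blast
    qed
  qed
qed

end

theorem lemma8:
  fixes \<Phi> S :: "'a::euclidean_space set" and \<alpha> \<beta> \<gamma> :: 'a
  assumes "crystallographic_root_system \<Phi>"
    and "irreducible_root_system \<Phi>"
    and "simple_system \<Phi> S"
    and "\<alpha> \<in> positive_roots \<Phi> S" and "\<beta> \<in> positive_roots \<Phi> S" and "\<gamma> \<in> positive_roots \<Phi> S"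
    and "\<beta> + \<gamma> \<in> positive_roots \<Phi> S"
    and "root_le S \<alpha> (\<beta> + \<gamma>)"
  shows "root_le S \<alpha> \<beta> \<or> root_le S \<alpha> \<gamma> \<or>
    (\<exists>\<beta>' \<gamma>'. \<beta>' \<in> positive_roots \<Phi> S \<and> \<gamma>' \<in> positive_roots \<Phi> S \<and>
       root_le S \<beta>' \<beta> \<and> root_le S \<gamma>' \<gamma> \<and> \<alpha> = \<beta>' + \<gamma>')"
proof -
  interpret based_root_system \<Phi> S
    using assms(1,3) by unfold_locales
  obtain c where "\<beta> + \<gamma> - \<alpha> = (\<Sum>s\<in>S. real (c s) *\<^sub>R s)"
    using assms(8) unfolding root_le_def by blast
  then have "below_summands \<alpha> \<beta> \<gamma>"
    using below_summands_if_nat_combination assms(4-7) by blast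
  then show ?thesis unfolding below_summands_def .
qed

end
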